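(* Let $(M,d,+)$ be a metric semigroup, $f:I_a^b\to M$, $x,y\in I_a^b$ with $x<y$, and $x'\in I_x^y$. Define $\lambda,\mu\in\mathbb N_0^n$ by $\lambda_i=1$ if $x_i=x_i'$, $\lambda_i=0$ if $x_i<x_i'$; and $\mu_i=0$ if $x_i'=y_i$, $\mu_i=1$ if $x_i'<y_i$. Then $\lambda\le\mu$, $$I_x^y=\bigcup_{\alpha\in\mathbb N_0^n,\ \lambda\le\alpha\le\mu}I_{x+\alpha(x'-x)}^{x'+\alpha(y-x')},$$ where the rectangles in the union are non-degenerate with pairwise disjoint interiors, and $$\mathrm{md}_n(f,I_x^y)\le\sum_{\lambda\le\alpha\le\mu}\mathrm{md}_n\big(f,I_{x+\alpha(x'-x)}^{x'+\alpha(y-x')}\big).$$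
   Context: Fix $n\in\mathbb N$ and $a,b\in\mathbb R^n$ with $a<b$. Inequalities between points of $\mathbb R^n$ or multiindices are componentwise; $0$ and $1$ denote $(0,\dots,0)$ and $(1,\dots,1)$; for $x\le y$, $I_x^y=\prod_{i=1}^n[x_i,y_i]$; for $\theta\in\mathbb N_0^n$, $\theta x=(\theta_1x_1,\dots,\theta_nx_n)$, $|\theta|=\sum\theta_i$; $\mathcal E(n)$, $\mathcal O(n)$ are the sets of $\theta\in\mathbb N_0^n$, $\theta\le1$, with $|\theta|$ even, resp. odd. A metric semigroup $(M,d,+)$ is a metric space with an Abelian semigroup operation $+$ such that $d(u+w,v+w)=d(u,v)$. For $x\le y$ in $I_a^b$, $\mathrm{md}_n(f,I_x^y)=d\big(\sum_{\theta\in\mathcal E(n)}f(x+\theta(y-x)),\sum_{\eta\in\mathcal O(n)}f(x+\eta(y-x))\big)$. *)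

theory Defs
  imports "HOL-Analysis.Analysis"
begin

class metric_semigroup = metric_space + ab_semigroup_add +
  assumes dist_add_right_cancel: "dist (u + w) (v + w) = dist u v"

definition mi_mult :: "('n::finite \<Rightarrow> nat) \<Rightarrow> real^'n \<Rightarrow> real^'n" where
  "mi_mult \<theta> x = (\<chi> i. real (\<theta> i) * x $ i)"

definition even_mi :: "('n::finite \<Rightarrow> nat) set" where
  "even_mi = {\<theta>. (\<forall>i. \<theta> i \<le> 1) \<and> even (sum \<theta> UNIV)}"

definition odd_mi :: "('n::finite \<Rightarrow> nat) set" where
  "odd_mi = {\<theta>. (\<forall>i. \<theta> i \<le> 1) \<and> odd (sum \<theta> UNIV)}"

text \<open>Sum over a nonempty finite set in an Abelian semigroup (no neutral element).\<close>
definition ssum :: "('a \<Rightarrow> 'b::ab_semigroup_add) \<Rightarrow> 'a set \<Rightarrow> 'b" where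
  "ssum g A = Finite_Set.fold (\<lambda>a acc. g a + acc) (g (SOME a. a \<in> A)) (A - {SOME a. a \<in> A})"

definition md :: "(real^'n::finite \<Rightarrow> 'm::metric_semigroup) \<Rightarrow> real^'n \<Rightarrow> real^'n \<Rightarrow> real" where
  "md f x y = dist (ssum (\<lambda>\<theta>. f (x + mi_mult \<theta> (y - x))) even_mi)
                   (ssum (\<lambda>\<eta>. f (x + mi_mult \<eta> (y - x))) odd_mi)"

end

theory Submission
  imports Defs "HOL-Library.Multiset"
begin

(* Write V(S, p, q) for the multiset of vertices p + theta(q - p), theta in S,
   of the box with corners p, q.  Counting with
   signs (-1)^|theta|, the signed multiplicity of a point z among the vertices of a box
   factors over the coordinates as prod_i ([p_i = z_i] - [q_i = z_i]); summing these
   products over the sub-boxes telescopes coordinatewise to the product for the big box.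
   Hence the multiset identity
       V(even, x, y) + sum_alpha V(odd, sub-box alpha)
     = V(odd, x, y) + sum_alpha V(even, sub-box alpha)
   holds.  Applying f and summing (in the semigroup with a zero adjoined) shows that the
   corresponding semigroup sums agree; translation invariance of the metric and the
   triangle inequality then give md f x y <= sum_alpha md f (sub-box alpha). *)

subsection \<open>Finite sums in an Abelian semigroup\<close>

text \<open>Adjoining a neutral element turns an Abelian semigroup into a commutative monoid;
  this lets us compute the semigroup sum \<open>ssum\<close> with the library's \<open>sum\<close> and \<open>sum_mset\<close>.\<close>

datatype 'a with_zero = Zero | Elem 'a

instantiation with_zero :: (ab_semigroup_add) comm_monoid_add
begin

definition zero_with_zero_def: "0 = Zero"

fun plus_with_zero :: "'a with_zero \<Rightarrow> 'a with_zero \<Rightarrow> 'a with_zero" where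
  "plus_with_zero Zero b = b"
| "plus_with_zero (Elem a) Zero = Elem a"
| "plus_with_zero (Elem a) (Elem b) = Elem (a + b)"

instance
proof
  fix a b c :: "'a with_zero"
  show "a + b + c = a + (b + c)" by (cases a; cases b; cases c) (auto simp: add.assoc)
  show "a + b = b + a" by (cases a; cases b) (auto simp: add.commute)
  show "0 + a = a" by (simp add: zero_with_zero_def)
qed

end

lemma Elem_fold:
  fixes g :: "'b \<Rightarrow> 'a::ab_semigroup_add"
  assumes "finite B"
  shows "Elem (Finite_Set.fold (\<lambda>a acc. g a + acc) z B) = Elem z + (\<Sum>a\<in>B. Elem (g a))"
  using assms
proof (induction B rule: finite_induct)
  case empty
  then show ?case by (simp add: zero_with_zero_def[symmetric])
next
  case (insert a B)
  interpret comp_fun_commute "\<lambda>a acc. g a + acc"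
    by unfold_locales (auto simp: fun_eq_iff add.left_commute)
  have "Finite_Set.fold (\<lambda>a acc. g a + acc) z (insert a B)
      = g a + Finite_Set.fold (\<lambda>a acc. g a + acc) z B"
    using insert by (simp add: fold_insert)
  then have "Elem (Finite_Set.fold (\<lambda>a acc. g a + acc) z (insert a B))
      = Elem (g a) + Elem (Finite_Set.fold (\<lambda>a acc. g a + acc) z B)"
    by simp
  then show ?case using insert by (simp add: add.left_commute)
qed

lemma Elem_ssum:
  fixes g :: "'b \<Rightarrow> 'a::ab_semigroup_add"
  assumes "finite A" "A \<noteq> {}"
  shows "Elem (ssum g A) = (\<Sum>a\<in>A. Elem (g a))"
proof -
  define a0 where "a0 = (SOME a. a \<in> A)"
  have a0: "a0 \<in> A" unfolding a0_def using assms(2) by (simp add: some_in_eq)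
  have "Elem (ssum g A) = Elem (g a0) + (\<Sum>a\<in>A - {a0}. Elem (g a))"
    unfolding ssum_def a0_def[symmetric] using assms(1) by (simp add: Elem_fold)
  also have "\<dots> = (\<Sum>a\<in>A. Elem (g a))"
    using sum.remove[OF assms(1) a0, of "\<lambda>a. Elem (g a)"] by simp
  finally show ?thesis .
qed

lemma ssum_insert:
  fixes g :: "'b \<Rightarrow> 'a::ab_semigroup_add"
  assumes "finite A" "A \<noteq> {}" "a \<notin> A"
  shows "ssum g (insert a A) = g a + ssum g A"
proof -
  have "Elem (ssum g (insert a A)) = Elem (g a) + Elem (ssum g A)"
    using assms by (simp add: Elem_ssum)
  then show ?thesis by simp
qed

lemma ssum_singleton: "ssum g {a} = g a"
proof -
  have "Elem (ssum g {a}) = Elem (g a)" by (simp add: Elem_ssum)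
  then show ?thesis by simp
qed

lemma dist_add_add_le:
  fixes a b c d :: "'m::metric_semigroup"
  shows "dist (a + b) (c + d) \<le> dist a c + dist b d"
proof -
  have "dist (a + b) (c + d) \<le> dist (a + b) (c + b) + dist (c + b) (c + d)"
    by (rule dist_triangle)
  also have "dist (a + b) (c + b) = dist a c" by (rule dist_add_right_cancel)
  also have "dist (c + b) (c + d) = dist b d"
    using dist_add_right_cancel[of b c d] by (simp add: add.commute)
  finally show ?thesis by simp
qed

lemma dist_ssum_le:
  fixes g h :: "'b \<Rightarrow> 'm::metric_semigroup"
  assumes "finite A" "A \<noteq> {}"
  shows "dist (ssum g A) (ssum h A) \<le> (\<Sum>a\<in>A. dist (g a) (h a))"
  using assms
proof (induction A rule: finite_ne_induct)
  case (singleton a)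
  then show ?case by (simp add: ssum_singleton)
next
  case (insert a A)
  then show ?case
    using dist_add_add_le[of "g a" "ssum g A" "h a" "ssum h A"] by (simp add: ssum_insert)
qed

lemma dist_eq_of_sum_eq:
  fixes a b c d :: "'m::metric_semigroup"
  assumes "a + d = b + c"
  shows "dist a b = dist c d"
proof -
  have "dist a b = dist (a + d) (b + d)" by (simp add: dist_add_right_cancel)
  also have "\<dots> = dist (c + b) (d + b)" using assms by (simp add: add.commute)
  also have "\<dots> = dist c d" by (rule dist_add_right_cancel)
  finally show ?thesis .
qed

subsection \<open>Vertices of a box\<close>

definition vertex :: "real^'n::finite \<Rightarrow> real^'n \<Rightarrow> ('n \<Rightarrow> nat) \<Rightarrow> real^'n" where
  "vertex p q \<theta> = p + mi_mult \<theta> (q - p)"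

lemma vertex_nth: "vertex p q \<theta> $ i = p $ i + real (\<theta> i) * (q $ i - p $ i)"
  by (simp add: vertex_def mi_mult_def)

lemma md_vertex:
  "md f p q = dist (ssum (\<lambda>\<theta>. f (vertex p q \<theta>)) even_mi) (ssum (\<lambda>\<theta>. f (vertex p q \<theta>)) odd_mi)"
  by (simp add: md_def vertex_def)

definition zero_one_mi :: "('n::finite \<Rightarrow> nat) set" where
  "zero_one_mi = {\<theta>. \<forall>i. \<theta> i \<le> 1}"

lemma zero_one_mi_PiE: "zero_one_mi = PiE UNIV (\<lambda>_. {0, 1})"
  by (auto simp: zero_one_mi_def PiE_iff le_Suc_eq) (metis less_numeral_extra(3))

lemma zero_one_mi_even_odd: "zero_one_mi = even_mi \<union> odd_mi" "even_mi \<inter> odd_mi = {}"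
  by (auto simp: zero_one_mi_def even_mi_def odd_mi_def)

lemma finite_zero_one_mi: "finite zero_one_mi"
  unfolding zero_one_mi_PiE by (rule finite_PiE) auto

lemma finite_even_mi: "finite even_mi" and finite_odd_mi: "finite odd_mi"
  using finite_zero_one_mi by (auto simp: zero_one_mi_even_odd)

lemma even_mi_nonempty: "even_mi \<noteq> {}"
proof -
  have "(\<lambda>_. 0) \<in> even_mi" by (simp add: even_mi_def)
  then show ?thesis by blast
qed

lemma odd_mi_nonempty: "odd_mi \<noteq> {}"
proof -
  have "(\<lambda>j. if j = undefined then 1 else 0) \<in> odd_mi" by (simp add: odd_mi_def)
  then show ?thesis by blast
qed

lemma prod_of_bool:
  assumes "finite A"
  shows "(\<Prod>i\<in>A. of_bool (P i)) = (of_bool (\<forall>i\<in>A. P i) :: 'a::comm_semiring_1)"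
  using assms by (induction A rule: finite_induct) auto

lemma signed_vertex_count:
  fixes p q z :: "real^'n::finite"
  shows "(\<Sum>\<theta>\<in>zero_one_mi. (-1) ^ sum \<theta> UNIV * of_bool (vertex p q \<theta> = z) :: int)
    = (\<Prod>i\<in>UNIV. of_bool (p $ i = z $ i) - of_bool (q $ i = z $ i))"
proof -
  have "(\<Prod>i\<in>UNIV. of_bool (p $ i = z $ i) - of_bool (q $ i = z $ i) :: int)
      = (\<Prod>i\<in>UNIV. \<Sum>t\<in>{0, 1::nat}. (-1) ^ t * of_bool (vertex p q (\<lambda>_. t) $ i = z $ i))"
    by (simp add: vertex_nth del: sum_mult_of_bool_eq)
  also have "\<dots> = (\<Sum>\<theta>\<in>zero_one_mi. \<Prod>i\<in>UNIV. (-1) ^ \<theta> i * of_bool (vertex p q \<theta> $ i = z $ i))"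
    unfolding zero_one_mi_PiE by (subst prod_sum_PiE) (auto simp: vertex_nth)
  also have "\<dots> = (\<Sum>\<theta>\<in>zero_one_mi. (-1) ^ sum \<theta> UNIV * of_bool (vertex p q \<theta> = z))"
    by (simp add: prod.distrib power_sum vec_eq_iff prod_of_bool)
  finally show ?thesis ..
qed

definition vertices :: "('n::finite \<Rightarrow> nat) set \<Rightarrow> real^'n \<Rightarrow> real^'n \<Rightarrow> (real^'n) multiset" where
  "vertices S p q = (\<Sum>\<theta>\<in>S. {#vertex p q \<theta>#})"

lemma count_vertices: "count (vertices S p q) z = (\<Sum>\<theta>\<in>S. of_bool (vertex p q \<theta> = z))"
  unfolding vertices_def count_sum by (rule sum.cong) auto

lemma count_vertices_even_odd:
  "int (count (vertices even_mi p q) z) - int (count (vertices odd_mi p q) z)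
    = (\<Prod>i\<in>UNIV. of_bool (p $ i = z $ i) - of_bool (q $ i = z $ i))"
proof -
  have "(\<Prod>i\<in>UNIV. of_bool (p $ i = z $ i) - of_bool (q $ i = z $ i))
      = (\<Sum>\<theta>\<in>even_mi. (-1) ^ sum \<theta> UNIV * of_bool (vertex p q \<theta> = z) :: int)
      + (\<Sum>\<theta>\<in>odd_mi. (-1) ^ sum \<theta> UNIV * of_bool (vertex p q \<theta> = z))"
    unfolding signed_vertex_count[symmetric] zero_one_mi_even_odd(1)
    by (rule sum.union_disjoint[OF finite_even_mi finite_odd_mi zero_one_mi_even_odd(2)])
  also have "(\<Sum>\<theta>\<in>even_mi. (-1) ^ sum \<theta> UNIV * of_bool (vertex p q \<theta> = z) :: int)
      = int (count (vertices even_mi p q) z)"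
    unfolding count_vertices of_nat_sum by (rule sum.cong) (auto simp: even_mi_def)
  also have "(\<Sum>\<theta>\<in>odd_mi. (-1) ^ sum \<theta> UNIV * of_bool (vertex p q \<theta> = z) :: int)
      = - int (count (vertices odd_mi p q) z)"
    unfolding count_vertices of_nat_sum sum_negf[symmetric] by (rule sum.cong) (auto simp: odd_mi_def)
  finally show ?thesis by simp
qed

lemma Elem_ssum_vertices:
  fixes f :: "real^'n::finite \<Rightarrow> 'm::ab_semigroup_add"
  assumes "finite S" "S \<noteq> {}"
  shows "Elem (ssum (\<lambda>\<theta>. f (vertex p q \<theta>)) S) = sum_mset (image_mset (Elem \<circ> f) (vertices S p q))"
  unfolding vertices_def using assms
  by (simp add: Elem_ssum sum_comp_morphism[symmetric, of "\<lambda>M. sum_mset (image_mset (Elem \<circ> f) M)"])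

lemma md_le_sum_of_vertex_balance:
  fixes f :: "real^'n::finite \<Rightarrow> 'm::metric_semigroup" and lo hi :: "'a \<Rightarrow> real^'n"
  assumes A: "finite A" "A \<noteq> {}"
    and balance: "vertices even_mi x y + (\<Sum>\<alpha>\<in>A. vertices odd_mi (lo \<alpha>) (hi \<alpha>))
      = vertices odd_mi x y + (\<Sum>\<alpha>\<in>A. vertices even_mi (lo \<alpha>) (hi \<alpha>))"
  shows "md f x y \<le> (\<Sum>\<alpha>\<in>A. md f (lo \<alpha>) (hi \<alpha>))"
proof -
  define \<Phi> where "\<Phi> M = sum_mset (image_mset (Elem \<circ> f) M)" for M
  have \<Phi>_add: "\<Phi> (M + N) = \<Phi> M + \<Phi> N" for M N by (simp add: \<Phi>_def)
  have \<Phi>_sum: "\<Phi> (\<Sum>\<alpha>\<in>A. g \<alpha>) = (\<Sum>\<alpha>\<in>A. \<Phi> (g \<alpha>))" for g :: "'a \<Rightarrow> (real^'n) multiset"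
    using sum_comp_morphism[of \<Phi> g A] by (simp add: \<Phi>_def o_def)
  define ssum_over where "ssum_over S p q = ssum (\<lambda>\<theta>. f (vertex p q \<theta>)) S" for S p q
  define even_part where "even_part = ssum (\<lambda>\<alpha>. ssum_over even_mi (lo \<alpha>) (hi \<alpha>)) A"
  define odd_part where "odd_part = ssum (\<lambda>\<alpha>. ssum_over odd_mi (lo \<alpha>) (hi \<alpha>)) A"
  have Elem_over: "Elem (ssum_over S p q) = \<Phi> (vertices S p q)"
    if "finite S" "S \<noteq> {}" for S p q
    using Elem_ssum_vertices[OF that] by (simp add: ssum_over_def \<Phi>_def)
  have "\<Phi> (vertices even_mi x y) + (\<Sum>\<alpha>\<in>A. \<Phi> (vertices odd_mi (lo \<alpha>) (hi \<alpha>)))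
      = \<Phi> (vertices odd_mi x y) + (\<Sum>\<alpha>\<in>A. \<Phi> (vertices even_mi (lo \<alpha>) (hi \<alpha>)))"
    using arg_cong[OF balance, of \<Phi>] by (simp only: \<Phi>_add \<Phi>_sum)
  then have "Elem (ssum_over even_mi x y + odd_part) = Elem (ssum_over odd_mi x y + even_part)"
    by (simp add: even_part_def odd_part_def Elem_ssum[OF A] Elem_over
        finite_even_mi finite_odd_mi even_mi_nonempty odd_mi_nonempty
        del: plus_with_zero.simps add: plus_with_zero.simps(3)[symmetric])
  then have "ssum_over even_mi x y + odd_part = ssum_over odd_mi x y + even_part" by simp
  then have "md f x y = dist even_part odd_part"
    unfolding md_vertex ssum_over_def[symmetric] by (rule dist_eq_of_sum_eq)
  also have "\<dots> \<le> (\<Sum>\<alpha>\<in>A. md f (lo \<alpha>) (hi \<alpha>))"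
    unfolding even_part_def odd_part_def md_vertex ssum_over_def by (rule dist_ssum_le[OF A])
  finally show ?thesis .
qed

subsection \<open>The subdivision of a box at a point\<close>

text \<open>For a box with corners \<open>x\<close>, \<open>y\<close> and a point \<open>x'\<close>, the sub-box with index \<open>\<alpha>\<close> has
  corners \<open>vertex x x' \<alpha>\<close> and \<open>vertex x' y \<alpha>\<close>; in coordinate \<open>i\<close> it is the lower piece
  \<open>[x\<^sub>i, x'\<^sub>i]\<close> if \<open>\<alpha> i = 0\<close> and the upper piece \<open>[x'\<^sub>i, y\<^sub>i]\<close> if \<open>\<alpha> i = 1\<close>.
  A piece is allowed only if it is non-degenerate, which is encoded by the bounds below.\<close>
definition split_min :: "real^'n::finite \<Rightarrow> real^'n \<Rightarrow> 'n \<Rightarrow> nat" where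
  "split_min x x' = (\<lambda>i. if x $ i = x' $ i then 1 else 0)"

definition split_max :: "real^'n::finite \<Rightarrow> real^'n \<Rightarrow> 'n \<Rightarrow> nat" where
  "split_max x' y = (\<lambda>i. if x' $ i = y $ i then 0 else 1)"

definition split_indices :: "real^'n::finite \<Rightarrow> real^'n \<Rightarrow> real^'n \<Rightarrow> ('n \<Rightarrow> nat) set" where
  "split_indices x x' y = {\<alpha>. split_min x x' \<le> \<alpha> \<and> \<alpha> \<le> split_max x' y}"

lemma split_indices_PiE:
  "split_indices x x' y = PiE UNIV (\<lambda>i. {split_min x x' i..split_max x' y i})"
  by (auto simp: split_indices_def PiE_iff le_fun_def)

lemma finite_split_indices: "finite (split_indices x x' y)"
  unfolding split_indices_PiE by (rule finite_PiE) auto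

text \<open>In each coordinate at least one of the two pieces is non-degenerate.\<close>
lemma split_min_le_max:
  assumes "\<forall>i. x $ i \<noteq> y $ i"
  shows "split_min x x' \<le> split_max x' y"
  using assms by (auto simp: le_fun_def split_min_def split_max_def)

lemma split_indices_nonempty:
  assumes "\<forall>i. x $ i \<noteq> y $ i"
  shows "split_indices x x' y \<noteq> {}"
  using split_min_le_max[OF assms] by (auto simp: split_indices_def)

lemma split_index_coord:
  assumes "\<alpha> \<in> split_indices x x' y"
  shows "(\<alpha> i = 0 \<and> x $ i \<noteq> x' $ i) \<or> (\<alpha> i = 1 \<and> x' $ i \<noteq> y $ i)"
  using assms by (auto simp: split_indices_def split_min_def split_max_def le_fun_def
      split: if_splits dest!: spec[of _ i])

lemma split_indices_zero_one:
  assumes "\<alpha> \<in> split_indices x x' y"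
  shows "\<alpha> \<in> zero_one_mi"
proof -
  have "\<alpha> i \<le> 1" for i using split_index_coord[OF assms, of i] by auto
  then show ?thesis by (simp add: zero_one_mi_def)
qed

lemma subbox_nondegenerate:
  assumes "x' \<in> cbox x y" "\<alpha> \<in> split_indices x x' y"
  shows "vertex x x' \<alpha> $ i < vertex x' y \<alpha> $ i"
  using split_index_coord[OF assms(2), of i] assms(1)
  by (auto simp: vertex_nth mem_box_cart less_le dest!: spec[of _ i])

text \<open>The sub-boxes cover the box: in each coordinate a point lies in the lower piece
  if that piece is non-degenerate and contains it, and in the upper piece otherwise.\<close>
lemma subbox_cover:
  assumes xy: "\<forall>i. x $ i < y $ i" and x': "x' \<in> cbox x y"
  shows "cbox x y = (\<Union>\<alpha>\<in>split_indices x x' y. cbox (vertex x x' \<alpha>) (vertex x' y \<alpha>))"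
proof
  have x'i: "x $ i \<le> x' $ i" "x' $ i \<le> y $ i" for i
    using x' by (auto simp: mem_box_cart)
  show "cbox x y \<subseteq> (\<Union>\<alpha>\<in>split_indices x x' y. cbox (vertex x x' \<alpha>) (vertex x' y \<alpha>))"
  proof
    fix z assume "z \<in> cbox x y"
    then have zi: "x $ i \<le> z $ i" "z $ i \<le> y $ i" for i by (auto simp: mem_box_cart)
    define \<alpha> where "\<alpha> i = (if z $ i \<le> x' $ i \<and> x $ i \<noteq> x' $ i then 0 else 1::nat)" for i
    have "\<alpha> \<in> split_indices x x' y"
      using xy zi by (auto simp: \<alpha>_def split_indices_def split_min_def split_max_def le_fun_def;
          metis less_irrefl)
    moreover have "z \<in> cbox (vertex x x' \<alpha>) (vertex x' y \<alpha>)"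
      using zi x'i by (auto simp: \<alpha>_def mem_box_cart vertex_nth; metis)
    ultimately show "z \<in> (\<Union>\<alpha>\<in>split_indices x x' y. cbox (vertex x x' \<alpha>) (vertex x' y \<alpha>))"
      by blast
  qed
  show "(\<Union>\<alpha>\<in>split_indices x x' y. cbox (vertex x x' \<alpha>) (vertex x' y \<alpha>)) \<subseteq> cbox x y"
  proof clarify
    fix \<alpha> z assume \<alpha>: "\<alpha> \<in> split_indices x x' y"
      and z: "z \<in> cbox (vertex x x' \<alpha>) (vertex x' y \<alpha>)"
    show "z \<in> cbox x y" unfolding mem_box_cart
    proof
      fix i
      have "vertex x x' \<alpha> $ i \<le> z $ i" "z $ i \<le> vertex x' y \<alpha> $ i"
        using z by (auto simp: mem_box_cart)
      then show "x $ i \<le> z $ i \<and> z $ i \<le> y $ i"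
        using split_index_coord[OF \<alpha>, of i] x'i[of i] by (auto simp: vertex_nth)
    qed
  qed
qed

text \<open>Distinct 0/1 indices differ in some coordinate, where one box uses the lower and
  the other the upper piece; these pieces meet only at \<open>x'\<^sub>i\<close>.\<close>
lemma subbox_interiors_disjoint:
  assumes x': "x' \<in> cbox x y" and \<alpha>: "\<alpha> \<in> zero_one_mi" and \<beta>: "\<beta> \<in> zero_one_mi"
    and "\<alpha> \<noteq> \<beta>"
  shows "interior (cbox (vertex x x' \<alpha>) (vertex x' y \<alpha>))
    \<inter> interior (cbox (vertex x x' \<beta>) (vertex x' y \<beta>)) = {}"
proof (rule ccontr)
  obtain i where i: "\<alpha> i \<noteq> \<beta> i" using \<open>\<alpha> \<noteq> \<beta>\<close> by (auto simp: fun_eq_iff)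
  assume "\<not> ?thesis"
  then obtain z where "z \<in> box (vertex x x' \<alpha>) (vertex x' y \<alpha>)" "z \<in> box (vertex x x' \<beta>) (vertex x' y \<beta>)"
    by auto
  then have "vertex x x' \<alpha> $ i < z $ i" "z $ i < vertex x' y \<alpha> $ i"
    "vertex x x' \<beta> $ i < z $ i" "z $ i < vertex x' y \<beta> $ i"
    by (auto simp: mem_box_cart)
  moreover have "\<alpha> i \<le> 1" "\<beta> i \<le> 1" using \<alpha> \<beta> by (auto simp: zero_one_mi_def)
  ultimately show False using i by (auto simp: vertex_nth le_Suc_eq)
qed

lemma telescope_coord:
  fixes u v w t :: real
  assumes "u \<noteq> w"
  shows "(\<Sum>a\<in>{(if u = v then 1 else 0)..(if v = w then 0 else 1::nat)}.
      of_bool (u + real a * (v - u) = t) - of_bool (v + real a * (w - v) = t))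
    = (of_bool (u = t) - of_bool (w = t) :: int)"
proof -
  have "{0..1::nat} = {0, 1}" by auto
  then show ?thesis using assms by (cases "u = v"; cases "v = w") auto
qed

lemma subbox_signed_count_telescope:
  fixes x x' y z :: "real^'n::finite"
  assumes "\<forall>i. x $ i \<noteq> y $ i"
  shows "(\<Sum>\<alpha>\<in>split_indices x x' y. \<Prod>i\<in>UNIV.
      of_bool (vertex x x' \<alpha> $ i = z $ i) - of_bool (vertex x' y \<alpha> $ i = z $ i))
    = (\<Prod>i\<in>UNIV. of_bool (x $ i = z $ i) - of_bool (y $ i = z $ i) :: int)"
proof -
  have "(\<Sum>\<alpha>\<in>split_indices x x' y. \<Prod>i\<in>UNIV.
      of_bool (vertex x x' \<alpha> $ i = z $ i) - of_bool (vertex x' y \<alpha> $ i = z $ i) :: int)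
    = (\<Prod>i\<in>UNIV. \<Sum>a\<in>{split_min x x' i..split_max x' y i}.
      of_bool (x $ i + real a * (x' $ i - x $ i) = z $ i)
      - of_bool (x' $ i + real a * (y $ i - x' $ i) = z $ i))"
    unfolding split_indices_PiE by (subst prod_sum_PiE) (auto simp: vertex_nth)
  also have "\<dots> = (\<Prod>i\<in>UNIV. of_bool (x $ i = z $ i) - of_bool (y $ i = z $ i))"
  proof (rule prod.cong[OF refl])
    fix i
    show "(\<Sum>a\<in>{split_min x x' i..split_max x' y i}.
        of_bool (x $ i + real a * (x' $ i - x $ i) = z $ i)
        - of_bool (x' $ i + real a * (y $ i - x' $ i) = z $ i))
      = (of_bool (x $ i = z $ i) - of_bool (y $ i = z $ i) :: int)"
      unfolding split_min_def split_max_def using assms by (intro telescope_coord) simp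
  qed
  finally show ?thesis .
qed

lemma subdivision_vertex_balance:
  fixes x x' y :: "real^'n::finite"
  assumes "\<forall>i. x $ i \<noteq> y $ i"
  shows "vertices even_mi x y
      + (\<Sum>\<alpha>\<in>split_indices x x' y. vertices odd_mi (vertex x x' \<alpha>) (vertex x' y \<alpha>))
    = vertices odd_mi x y
      + (\<Sum>\<alpha>\<in>split_indices x x' y. vertices even_mi (vertex x x' \<alpha>) (vertex x' y \<alpha>))"
proof (rule multiset_eqI)
  fix z :: "real^'n"
  let ?count = "\<lambda>S p q. int (count (vertices S p q) z)"
  have "?count even_mi x y - ?count odd_mi x y
      = (\<Sum>\<alpha>\<in>split_indices x x' y. ?count even_mi (vertex x x' \<alpha>) (vertex x' y \<alpha>)
          - ?count odd_mi (vertex x x' \<alpha>) (vertex x' y \<alpha>))"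
    unfolding count_vertices_even_odd subbox_signed_count_telescope[OF assms] ..
  then have "?count even_mi x y
      + (\<Sum>\<alpha>\<in>split_indices x x' y. ?count odd_mi (vertex x x' \<alpha>) (vertex x' y \<alpha>))
    = ?count odd_mi x y
      + (\<Sum>\<alpha>\<in>split_indices x x' y. ?count even_mi (vertex x x' \<alpha>) (vertex x' y \<alpha>))"
    by (simp add: sum_subtractf)
  then show "count (vertices even_mi x y
      + (\<Sum>\<alpha>\<in>split_indices x x' y. vertices odd_mi (vertex x x' \<alpha>) (vertex x' y \<alpha>))) z
    = count (vertices odd_mi x y
      + (\<Sum>\<alpha>\<in>split_indices x x' y. vertices even_mi (vertex x x' \<alpha>) (vertex x' y \<alpha>))) z"
    unfolding count_union count_sum by (simp only: of_nat_sum[symmetric] of_nat_add of_nat_eq_iff)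
qed

theorem lemma11:
  fixes f :: "real^'n \<Rightarrow> 'm::metric_semigroup"
    and a b x y x' :: "real^'n"
    and lam mu :: "'n \<Rightarrow> nat"
  assumes ab: "\<forall>i. a $ i < b $ i"
    and x: "x \<in> cbox a b" and y: "y \<in> cbox a b"
    and xy: "\<forall>i. x $ i < y $ i"
    and x': "x' \<in> cbox x y"
    and lam_def: "lam = (\<lambda>i. if x $ i = x' $ i then 1 else 0)"
    and mu_def: "mu = (\<lambda>i. if x' $ i = y $ i then 0 else 1)"
  shows "lam \<le> mu
    \<and> cbox x y = (\<Union>\<alpha>\<in>{\<alpha>. lam \<le> \<alpha> \<and> \<alpha> \<le> mu}.
          cbox (x + mi_mult \<alpha> (x' - x)) (x' + mi_mult \<alpha> (y - x')))
    \<and> (\<forall>\<alpha>\<in>{\<alpha>. lam \<le> \<alpha> \<and> \<alpha> \<le> mu}. \<forall>i.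
          (x + mi_mult \<alpha> (x' - x)) $ i < (x' + mi_mult \<alpha> (y - x')) $ i)
    \<and> (\<forall>\<alpha>\<in>{\<alpha>. lam \<le> \<alpha> \<and> \<alpha> \<le> mu}. \<forall>\<beta>\<in>{\<alpha>. lam \<le> \<alpha> \<and> \<alpha> \<le> mu}. \<alpha> \<noteq> \<beta> \<longrightarrow>
          interior (cbox (x + mi_mult \<alpha> (x' - x)) (x' + mi_mult \<alpha> (y - x')))
          \<inter> interior (cbox (x + mi_mult \<beta> (x' - x)) (x' + mi_mult \<beta> (y - x'))) = {})
    \<and> md f x y \<le> (\<Sum>\<alpha>\<in>{\<alpha>. lam \<le> \<alpha> \<and> \<alpha> \<le> mu}.
          md f (x + mi_mult \<alpha> (x' - x)) (x' + mi_mult \<alpha> (y - x')))"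
proof -
  have x_ne_y: "\<forall>i. x $ i \<noteq> y $ i" using xy by (simp add: less_imp_neq)
  have lam_mu: "lam = split_min x x'" "mu = split_max x' y"
    by (simp_all add: lam_def mu_def split_min_def split_max_def)
  show ?thesis
    unfolding lam_mu split_indices_def[symmetric] vertex_def[symmetric]
  proof (intro conjI ballI allI impI)
    show "split_min x x' \<le> split_max x' y" by (rule split_min_le_max[OF x_ne_y])
    show "cbox x y = (\<Union>\<alpha>\<in>split_indices x x' y. cbox (vertex x x' \<alpha>) (vertex x' y \<alpha>))"
      by (rule subbox_cover[OF xy x'])
    show "vertex x x' \<alpha> $ i < vertex x' y \<alpha> $ i" if "\<alpha> \<in> split_indices x x' y" for \<alpha> i
      by (rule subbox_nondegenerate[OF x' that])
    show "interior (cbox (vertex x x' \<alpha>) (vertex x' y \<alpha>))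
        \<inter> interior (cbox (vertex x x' \<beta>) (vertex x' y \<beta>)) = {}"
      if "\<alpha> \<in> split_indices x x' y" "\<beta> \<in> split_indices x x' y" "\<alpha> \<noteq> \<beta>" for \<alpha> \<beta>
      using subbox_interiors_disjoint[OF x' split_indices_zero_one[OF that(1)]
          split_indices_zero_one[OF that(2)] that(3)] .
    show "md f x y \<le> (\<Sum>\<alpha>\<in>split_indices x x' y. md f (vertex x x' \<alpha>) (vertex x' y \<alpha>))"
      by (rule md_le_sum_of_vertex_balance[OF finite_split_indices
            split_indices_nonempty[OF x_ne_y] subdivision_vertex_balance[OF x_ne_y]])
  qed
qed

end
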